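(* Let $d\ge2$, $p=d-1$, $\lambda>0$, $\sigma>0$, $\mu>0$, and set $u=\mu/\sigma^2$. Let $T$ be inverse Gaussian with mean $\lambda/\mu$ and shape $\lambda^2/\sigma^2$, let $\mathbf Z\sim\mathcal N(\mathbf 0,\mathbf I_p)$ be independent of $T$, and let $\mathbf N=\sigma\sqrt T\,\mathbf Z$ (so $\mathbf N\sim\mathrm{NDFHL}^{(d)}(\lambda,u)$). Define $$\underline h(u)=h(\mathbf N\mid T)=\frac p2\log(2\pi e\sigma^2)+\frac p2\mathbb E[\log T],\qquad \bar h(u)=\frac p2\log\!\left(2\pi e\frac{\lambda}{u}\right).$$ Then $\underline h(u)\le h(\mathbf N)\le\bar h(u)$, and $$0\le h(\mathbf N)-\underline h(u)\le\bar h(u)-\underline h(u)\le\frac p2\bigl(\log\mathbb E[T]-\mathbb E[\log T]\bigr).$$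
   Context: The inverse Gaussian law $IG(\nu,\kappa)$ with mean $\nu>0$ and shape $\kappa>0$ has density $f_T(t)=\sqrt{\kappa/(2\pi t^3)}\exp\!\bigl(-\kappa(t-\nu)^2/(2\nu^2t)\bigr)$, $t>0$. For an integer $d\ge2$, $p=d-1$, $\lambda,u>0$, $\mathrm{NDFHL}^{(d)}(\lambda,u)$ is the law on $\mathbb R^p$ with density $\frac{\lambda}{2^{d/2-1}\pi^{d/2}}\left(\frac{u}{\rho}\right)^{d/2}e^{\lambda u}K_{d/2}(u\rho)$, $\rho=\sqrt{\|\mathbf n\|^2+\lambda^2}$, $K_\nu$ the modified Bessel function of the second kind. $h$ denotes differential entropy; logarithms are natural. *)

theory Defs
  imports "HOL-Analysis.Analysis"
begin

text \<open>Inverse Gaussian density IG(nu, kappa) (mean nu, shape kappa), zero for t <= 0.\<close>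
definition ig_density :: "real \<Rightarrow> real \<Rightarrow> real \<Rightarrow> real" where
  "ig_density nu kappa t =
     (if t > 0 then sqrt (kappa / (2 * pi * t ^ 3)) * exp (- kappa * (t - nu)\<^sup>2 / (2 * nu\<^sup>2 * t))
      else 0)"

definition gauss_density :: "real \<Rightarrow> real ^ 'n \<Rightarrow> real" where
  "gauss_density s x =
     (2 * pi * s) powr (- real CARD('n) / 2) * exp (- (norm x)\<^sup>2 / (2 * s))"

text \<open>Density of N = sg * sqrt T * Z with T ~ IG(nu,kappa), Z ~ N(0,I_p) independent:
  the mixture over T of the conditional Gaussian laws N(0, sg^2 T I_p).\<close>
definition mix_density :: "real \<Rightarrow> real \<Rightarrow> real \<Rightarrow> real ^ 'n \<Rightarrow> real" where
  "mix_density sg nu kappa x =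
     (\<integral>t. ig_density nu kappa t * gauss_density (sg\<^sup>2 * t) x \<partial>lborel)"

definition diff_entropy :: "('a::euclidean_space \<Rightarrow> real) \<Rightarrow> real" where
  "diff_entropy f = - (\<integral>x. f x * ln (f x) \<partial>lborel)"

definition ig_expect :: "real \<Rightarrow> real \<Rightarrow> (real \<Rightarrow> real) \<Rightarrow> real" where
  "ig_expect nu kappa g = (\<integral>t. ig_density nu kappa t * g t \<partial>lborel)"

end

(* Both bounds are instances of Gibbs' inequality y ln z + y - z <= y ln y, applied pointwise to
   the density m of N = sqrt (s T) Z.  Comparing m with the centred Gaussian of the same second
   moment s p E[T] gives the maximum-entropy bound h(N) <= p/2 ln (2 pi e s E[T]).  Comparing, for
   each x, the conditional Gaussian densities of N given T = t with their average m (x) and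
   integrating against the law of T gives h(N) >= h(N | T) = p/2 ln (2 pi e s) + p/2 E[ln T].
   For the inverse Gaussian law the remaining inputs -- total mass 1, mean nu, integrability of
   ln T -- follow from the integrals of t^(-3/2) exp (-a t - b/t) and t^(-1/2) exp (-a t - b/t),
   which the Cauchy-Schloemilch substitution u = sqrt (a t) - sqrt (b/t) reduces to the Gaussian
   integral.  Since E[T] = nu, the last inequality is an equality. *)

theory Submission
  imports Defs "HOL-Probability.Probability"
begin

section \<open>Centred Gaussian densities on \<open>\<real>\<^sup>n\<close>\<close>

lemma norm_sq_eq_sum_inner:
  fixes x :: "'a::euclidean_space"
  shows "(norm x)\<^sup>2 = (\<Sum>b\<in>Basis. (x \<bullet> b)\<^sup>2)"
  unfolding power2_norm_eq_inner by (subst euclidean_inner) (simp add: power2_eq_square)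

lemma gauss_density_pos: "0 < s \<Longrightarrow> 0 < gauss_density s x"
  by (simp add: gauss_density_def)

lemma borel_measurable_gauss_density[measurable]: "gauss_density s \<in> borel_measurable borel"
  unfolding gauss_density_def[abs_def] by measurable

lemma ln_gauss_density:
  "0 < s \<Longrightarrow>
    ln (gauss_density s (x::real^'n)) = - (real CARD('n) / 2) * ln (2 * pi * s) - (norm x)\<^sup>2 / (2 * s)"
  by (simp add: gauss_density_def ln_mult ln_powr)

lemma gauss_density_eq_prod_normal_density:
  fixes x :: "real^'n"
  assumes s: "0 < s"
  shows "gauss_density s x = (\<Prod>b\<in>Basis. normal_density 0 (sqrt s) (x \<bullet> b))"
proof -
  have "(\<Prod>b\<in>Basis. normal_density 0 (sqrt s) (x \<bullet> b))
      = (\<Prod>b\<in>(Basis::(real^'n) set). (2 * pi * s) powr (- 1 / 2) * exp (- (x \<bullet> b)\<^sup>2 / (2 * s)))"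
    using s by (intro prod.cong) (simp_all add: normal_density_def powr_minus_divide powr_half_sqrt)
  also have "\<dots> = (2 * pi * s) powr (- real CARD('n) / 2)
      * exp (\<Sum>b\<in>(Basis::(real^'n) set). - (x \<bullet> b)\<^sup>2 / (2 * s))"
    using s by (simp add: prod.distrib exp_sum powr_realpow[symmetric] powr_powr)
  also have "(\<Sum>b\<in>(Basis::(real^'n) set). - (x \<bullet> b)\<^sup>2 / (2 * s)) = - (norm x)\<^sup>2 / (2 * s)"
    by (simp add: norm_sq_eq_sum_inner sum_divide_distrib sum_negf)
  finally show ?thesis unfolding gauss_density_def ..
qed

lemma nn_integral_gauss_density:
  assumes s: "0 < s"
  shows "(\<integral>\<^sup>+x. gauss_density s (x::real^'n) \<partial>lborel) = 1"
proof -
  have "(\<integral>\<^sup>+x. gauss_density s (x::real^'n) \<partial>lborel)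
      = (\<integral>\<^sup>+x. (\<Prod>b\<in>Basis. ennreal (normal_density 0 (sqrt s) (x \<bullet> b)))
          \<partial>(lborel :: (real^'n) measure))"
    using s by (intro nn_integral_cong) (simp add: gauss_density_eq_prod_normal_density prod_ennreal)
  also have "\<dots> = (\<Prod>b\<in>(Basis::(real^'n) set). \<integral>\<^sup>+y. normal_density 0 (sqrt s) y \<partial>lborel)"
    by (rule nn_integral_lborel_prod) auto
  also have "\<dots> = 1"
    using s by (simp add: nn_integral_eq_integral)
  finally show ?thesis .
qed

lemma nn_integral_normal_density_sq:
  assumes s: "0 < s"
  shows "(\<integral>\<^sup>+y. y\<^sup>2 * normal_density 0 (sqrt s) y \<partial>lborel) = s"
proof -
  have "has_bochner_integral lborel (\<lambda>y. y\<^sup>2 * normal_density 0 (sqrt s) y) s"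
    using normal_moment_even[of "sqrt s" 0 1] s by (simp add: mult.commute)
  then show ?thesis
    by (subst nn_integral_eq_integral) (auto simp: has_bochner_integral_iff)
qed

lemma nn_integral_gauss_density_norm_sq:
  assumes s: "0 < s"
  shows "(\<integral>\<^sup>+x. gauss_density s (x::real^'n) * (norm x)\<^sup>2 \<partial>lborel) = real CARD('n) * s"
proof -
  let ?\<phi> = "normal_density 0 (sqrt s)"
  let ?f = "\<lambda>c b y. if b = c then y\<^sup>2 * ?\<phi> y else ?\<phi> y"
  have "ennreal (gauss_density s x * (norm x)\<^sup>2) = (\<Sum>c\<in>Basis. \<Prod>b\<in>Basis. ennreal (?f c b (x \<bullet> b)))"
    for x :: "real^'n"
  proof -
    have "gauss_density s x * (norm x)\<^sup>2 = (\<Sum>c\<in>Basis. (x \<bullet> c)\<^sup>2 * (\<Prod>b\<in>Basis. ?\<phi> (x \<bullet> b)))"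
      using s by (simp add: gauss_density_eq_prod_normal_density norm_sq_eq_sum_inner sum_distrib_right mult.commute)
    also have "\<dots> = (\<Sum>c\<in>Basis. \<Prod>b\<in>Basis. ?f c b (x \<bullet> b))"
    proof (intro sum.cong refl)
      fix c :: "real^'n" assume "c \<in> Basis"
      have "(\<Prod>b\<in>Basis. ?f c b (x \<bullet> b))
          = (\<Prod>b\<in>Basis. (if b = c then (x \<bullet> b)\<^sup>2 else 1) * ?\<phi> (x \<bullet> b))"
        by (intro prod.cong) auto
      then show "(x \<bullet> c)\<^sup>2 * (\<Prod>b\<in>Basis. ?\<phi> (x \<bullet> b)) = (\<Prod>b\<in>Basis. ?f c b (x \<bullet> b))"
        using \<open>c \<in> Basis\<close> by (simp add: prod.distrib prod.delta)
    qed
    finally show ?thesis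
      by (simp add: prod_ennreal sum_ennreal prod_nonneg)
  qed
  then have "(\<integral>\<^sup>+x. gauss_density s (x::real^'n) * (norm x)\<^sup>2 \<partial>lborel)
      = (\<Sum>c\<in>Basis. \<integral>\<^sup>+x. (\<Prod>b\<in>Basis. ennreal (?f c b (x \<bullet> b)))
          \<partial>(lborel :: (real^'n) measure))"
    by (simp add: nn_integral_sum)
  also have "\<dots> = (\<Sum>c\<in>(Basis :: (real^'n) set). \<Prod>b\<in>Basis. \<integral>\<^sup>+y. ?f c b y \<partial>lborel)"
    by (intro sum.cong refl nn_integral_lborel_prod) auto
  also have "\<dots> = (\<Sum>c\<in>(Basis :: (real^'n) set). ennreal s)"
  proof (intro sum.cong refl)
    fix c :: "real^'n" assume "c \<in> Basis"
    have "(\<integral>\<^sup>+y. ?f c b y \<partial>lborel) = (if b = c then ennreal s else 1)" for b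
      using s by (cases "b = c") (simp_all add: nn_integral_normal_density_sq nn_integral_eq_integral)
    then show "(\<Prod>b\<in>Basis. \<integral>\<^sup>+y. ?f c b y \<partial>lborel) = ennreal s"
      using \<open>c \<in> Basis\<close> by (simp add: prod.delta)
  qed
  finally show ?thesis
    using s by (simp add: ennreal_of_nat_eq_real_of_nat ennreal_mult)
qed

lemma has_bochner_integral_gauss_density:
  "0 < s \<Longrightarrow> has_bochner_integral lborel (gauss_density s :: real^'n \<Rightarrow> real) 1"
  by (intro has_bochner_integral_nn_integral)
    (auto simp: nn_integral_gauss_density less_imp_le[OF gauss_density_pos])

lemma has_bochner_integral_gauss_density_norm_sq:
  "0 < s \<Longrightarrow>
    has_bochner_integral lborel (\<lambda>x::real^'n. gauss_density s x * (norm x)\<^sup>2) (real CARD('n) * s)"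
  by (intro has_bochner_integral_nn_integral)
    (auto simp: nn_integral_gauss_density_norm_sq less_imp_le[OF gauss_density_pos])

lemma has_bochner_integral_gauss_density_ln:
  assumes s: "0 < s"
  shows "has_bochner_integral lborel (\<lambda>x::real^'n. gauss_density s x * ln (gauss_density s x))
           (- (real CARD('n) / 2) * (ln (2 * pi * s) + 1))"
proof -
  have "has_bochner_integral lborel
      (\<lambda>x::real^'n. - (real CARD('n) / 2) * ln (2 * pi * s) * gauss_density s x
         - 1 / (2 * s) * (gauss_density s x * (norm x)\<^sup>2))
      (- (real CARD('n) / 2) * ln (2 * pi * s) * 1 - 1 / (2 * s) * (real CARD('n) * s))"
    using s by (intro has_bochner_integral_diff has_bochner_integral_mult_right
        has_bochner_integral_gauss_density has_bochner_integral_gauss_density_norm_sq)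
  moreover have "- (real CARD('n) / 2) * ln (2 * pi * s) * 1 - 1 / (2 * s) * (real CARD('n) * s)
      = - (real CARD('n) / 2) * (ln (2 * pi * s) + 1)"
    using s by (simp add: field_simps)
  moreover have "- (real CARD('n) / 2) * ln (2 * pi * s) * gauss_density s x
      - 1 / (2 * s) * (gauss_density s x * (norm x)\<^sup>2)
      = gauss_density s x * ln (gauss_density s x)" for x :: "real^'n"
    using s by (simp add: ln_gauss_density field_simps)
  ultimately show ?thesis by simp
qed

lemma nn_integral_abs_gauss_density_ln_le:
  assumes s: "0 < s"
  shows "(\<integral>\<^sup>+x. norm (gauss_density s (x::real^'n) * ln (gauss_density s x)) \<partial>lborel)
          \<le> real CARD('n) / 2 * \<bar>ln (2 * pi * s)\<bar> + real CARD('n) / 2"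
proof -
  let ?c = "real CARD('n) / 2 * \<bar>ln (2 * pi * s)\<bar>"
  have bound: "norm (gauss_density s x * ln (gauss_density s x))
      \<le> ?c * gauss_density s x + 1 / (2 * s) * (gauss_density s x * (norm x)\<^sup>2)" for x :: "real^'n"
  proof -
    have "\<bar>ln (gauss_density s x)\<bar> \<le> ?c + (norm x)\<^sup>2 / (2 * s)"
      using abs_triangle_ineq4[of "- (real CARD('n) / 2 * ln (2 * pi * s))" "(norm x)\<^sup>2 / (2 * s)"] s
      by (simp add: ln_gauss_density abs_mult)
    then have "gauss_density s x * \<bar>ln (gauss_density s x)\<bar> \<le> gauss_density s x * (?c + (norm x)\<^sup>2 / (2 * s))"
      by (rule mult_left_mono) (use gauss_density_pos[OF s, of x] in simp)
    then show ?thesis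
      using gauss_density_pos[OF s, of x] by (simp add: abs_mult distrib_left mult_ac)
  qed
  have "has_bochner_integral lborel
      (\<lambda>x::real^'n. ?c * gauss_density s x + 1 / (2 * s) * (gauss_density s x * (norm x)\<^sup>2))
      (?c * 1 + 1 / (2 * s) * (real CARD('n) * s))"
    using s by (intro has_bochner_integral_add has_bochner_integral_mult_right
        has_bochner_integral_gauss_density has_bochner_integral_gauss_density_norm_sq)
  then have "(\<integral>\<^sup>+x. ?c * gauss_density s (x::real^'n) + 1 / (2 * s) * (gauss_density s x * (norm x)\<^sup>2)
      \<partial>lborel)
      = ?c + real CARD('n) / 2"
    using s order_trans[OF norm_ge_zero bound]
    by (subst nn_integral_eq_integral) (auto simp: has_bochner_integral_iff)
  moreover have "(\<integral>\<^sup>+x. norm (gauss_density s (x::real^'n) * ln (gauss_density s x)) \<partial>lborel)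
      \<le> (\<integral>\<^sup>+x. ?c * gauss_density s (x::real^'n) + 1 / (2 * s) * (gauss_density s x * (norm x)\<^sup>2)
          \<partial>lborel)"
    by (intro nn_integral_mono ennreal_leI bound)
  ultimately show ?thesis by simp
qed

section \<open>Integrals of \<open>exp (-a t - b/t)\<close> over \<open>(0,\<infinity>)\<close>\<close>

lemma has_bochner_integral_indicator_of_has_integral:
  fixes f :: "'a::euclidean_space \<Rightarrow> real"
  assumes [measurable]: "f \<in> borel_measurable borel" "S \<in> sets borel"
    and nonneg: "\<And>x. x \<in> S \<Longrightarrow> 0 \<le> f x" and f: "(f has_integral I) S"
  shows "has_bochner_integral lborel (\<lambda>x. indicator S x * f x) I"
proof -
  have "integral\<^sup>N lborel (\<lambda>x. indicator S x * f x) = I"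
    using nonneg f by (rule nn_integral_has_integral_lebesgue)
  moreover have "0 \<le> I"
    using f nonneg by (rule has_integral_nonneg)
  ultimately show ?thesis
    using nonneg by (intro has_bochner_integral_nn_integral) (auto simp: indicator_def)
qed

lemma has_integral_exp_minus_sq: "((\<lambda>u::real. exp (- u\<^sup>2)) has_integral sqrt pi) UNIV"
proof -
  have "has_bochner_integral lborel (\<lambda>u. sqrt pi * normal_density 0 (sqrt (1/2)) u) (sqrt pi * 1)"
    by (intro has_bochner_integral_mult_right) (simp add: has_bochner_integral_iff)
  then have "has_bochner_integral lborel (\<lambda>u::real. exp (- u\<^sup>2)) (sqrt pi)"
    by (simp add: normal_density_def real_sqrt_divide power_divide)
  then show ?thesis
    using has_integral_integral_lborel[of "\<lambda>u::real. exp (- u\<^sup>2)"] by (simp add: has_bochner_integral_iff)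
qed

definition schloemilch_map :: "real \<Rightarrow> real \<Rightarrow> real \<Rightarrow> real" where
  "schloemilch_map a b t = sqrt a * sqrt t - sqrt b / sqrt t"

lemma schloemilch_map_has_field_derivative:
  assumes "0 < t"
  shows "(schloemilch_map a b has_field_derivative (sqrt a / (2 * sqrt t) + sqrt b / (2 * t * sqrt t))) (at t within S)"
  unfolding schloemilch_map_def using assms
  by (auto intro!: derivative_eq_intros simp: field_simps)

lemma strict_mono_on_schloemilch_map:
  assumes "0 < a" "0 < b"
  shows "strict_mono_on {0<..} (schloemilch_map a b)"
proof (rule strict_mono_onI)
  fix s t :: real assume "s \<in> {0<..}" "t \<in> {0<..}" "s < t"
  then have "sqrt a * sqrt s < sqrt a * sqrt t" "sqrt b / sqrt t < sqrt b / sqrt s"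
    using assms by (auto intro: divide_strict_left_mono)
  then show "schloemilch_map a b s < schloemilch_map a b t"
    unfolding schloemilch_map_def by linarith
qed

lemma schloemilch_map_image:
  assumes a: "0 < a" and b: "0 < b"
  shows "schloemilch_map a b ` {0<..} = UNIV"
proof -
  have "u \<in> schloemilch_map a b ` {0<..}" for u
  proof -
    define r where "r = (u + sqrt (u\<^sup>2 + 4 * sqrt a * sqrt b)) / (2 * sqrt a)"
    have "\<bar>u\<bar> < sqrt (u\<^sup>2 + 4 * sqrt a * sqrt b)"
      using a b by (intro real_less_rsqrt) (simp add: power2_abs)
    then have r: "0 < r"
      unfolding r_def using a by (intro divide_pos_pos) auto
    have "(sqrt (u\<^sup>2 + 4 * sqrt a * sqrt b))\<^sup>2 = u\<^sup>2 + 4 * sqrt a * sqrt b"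
      using a b by (intro real_sqrt_pow2) auto
    then have "sqrt a * r * r - u * r - sqrt b = 0"
      unfolding r_def using a by (simp add: field_simps power2_eq_square)
    then have "schloemilch_map a b (r\<^sup>2) = u"
      using r by (simp add: schloemilch_map_def field_simps)
    then show ?thesis
      using r by (intro image_eqI[of _ _ "r\<^sup>2"]) auto
  qed
  then show ?thesis by auto
qed

lemma exp_minus_schloemilch_map_sq:
  assumes "0 < a" "0 < b" "0 < t"
  shows "exp (- 2 * sqrt (a * b)) * exp (- (schloemilch_map a b t)\<^sup>2) = exp (- a * t - b / t)"
proof -
  have "(schloemilch_map a b t)\<^sup>2 = a * t + b / t - 2 * sqrt (a * b)"
    unfolding schloemilch_map_def using assms
    by (simp add: power2_eq_square field_simps real_sqrt_mult)
  then show ?thesis by (simp add: exp_add[symmetric])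
qed

lemma has_integral_schloemilch_gaussian:
  assumes a: "0 < a" and b: "0 < b"
  shows "((\<lambda>t. (sqrt a / (2 * sqrt t) + sqrt b / (2 * t * sqrt t)) * exp (- (schloemilch_map a b t)\<^sup>2))
           has_integral sqrt pi) {0<..}"
proof -
  have "(\<lambda>u::real. exp (- u\<^sup>2)) absolutely_integrable_on UNIV \<and>
      integral UNIV (\<lambda>u::real. exp (- u\<^sup>2)) = sqrt pi"
    using has_integral_exp_minus_sq
    by (auto simp: absolutely_integrable_on_iff_nonneg integral_unique intro: has_integral_integrable)
  then have "(\<lambda>t. \<bar>sqrt a / (2 * sqrt t) + sqrt b / (2 * t * sqrt t)\<bar> * exp (- (schloemilch_map a b t)\<^sup>2))
      absolutely_integrable_on {0<..} \<and>
    integral {0<..} (\<lambda>t. \<bar>sqrt a / (2 * sqrt t) + sqrt b / (2 * t * sqrt t)\<bar>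
      * exp (- (schloemilch_map a b t)\<^sup>2)) = sqrt pi"
    using schloemilch_map_has_field_derivative
      strict_mono_on_imp_inj_on[OF strict_mono_on_schloemilch_map[OF a b]] schloemilch_map_image[OF a b]
    by (subst has_absolute_integral_change_of_variables_1') auto
  then have "((\<lambda>t. \<bar>sqrt a / (2 * sqrt t) + sqrt b / (2 * t * sqrt t)\<bar> * exp (- (schloemilch_map a b t)\<^sup>2))
      has_integral sqrt pi) {0<..}"
    by (auto simp: has_integral_integrable_integral absolutely_integrable_on_def)
  then show ?thesis
    by (rule has_integral_cong[THEN iffD1, rotated]) (use a b in auto)
qed

lemma has_integral_inversion:
  fixes f :: "real \<Rightarrow> real"
  assumes c: "0 < c" and nonneg: "\<And>t. 0 < t \<Longrightarrow> 0 \<le> f t"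
    and I: "((\<lambda>r. c / r\<^sup>2 * f (c / r)) has_integral I) {0<..}"
  shows "(f has_integral I) {0<..}"
proof -
  have deriv: "((\<lambda>r. c / r) has_field_derivative (- c / r\<^sup>2)) (at r within {0<..})" if "0 < r" for r
    using that by (auto intro!: derivative_eq_intros simp: power2_eq_square field_simps)
  have inj: "inj_on (\<lambda>r. c / r) {0<..}"
    using c by (auto intro!: inj_onI simp: field_simps)
  have image: "(\<lambda>r. c / r) ` {0<..} = {0<..}"
  proof -
    have "t \<in> (\<lambda>r. c / r) ` {0<..}" if "0 < t" for t
      using c that by (intro image_eqI[of _ _ "c / t"]) auto
    then show ?thesis using c by auto
  qed
  have I': "((\<lambda>r. \<bar>- c / r\<^sup>2\<bar> * f (c / r)) has_integral I) {0<..}"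
    by (rule has_integral_cong[THEN iffD1, OF _ I]) (use c in simp)
  then have "(\<lambda>r. \<bar>- c / r\<^sup>2\<bar> * f (c / r)) absolutely_integrable_on {0<..}"
    using c nonneg by (subst absolutely_integrable_on_iff_nonneg) (auto intro: has_integral_integrable)
  then have "f absolutely_integrable_on (\<lambda>r. c / r) ` {0<..} \<and> integral ((\<lambda>r. c / r) ` {0<..}) f = I"
    using has_absolute_integral_change_of_variables_1'[OF _ deriv inj, where f = f and b = I] I'
    by (simp add: integral_unique)
  then show ?thesis
    using image set_lebesgue_integral_eq_integral(1) has_integral_integrable_integral by metis
qed

lemma has_integral_exp_at_b_over_t_combined:
  assumes a: "0 < a" and b: "0 < b"
  shows "((\<lambda>t. sqrt a * (exp (- a * t - b / t) / sqrt t) + sqrt b * (exp (- a * t - b / t) / (t * sqrt t)))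
           has_integral 2 * exp (- 2 * sqrt (a * b)) * sqrt pi) {0<..}"
proof -
  have "((\<lambda>t. 2 * exp (- 2 * sqrt (a * b)) * ((sqrt a / (2 * sqrt t) + sqrt b / (2 * t * sqrt t))
      * exp (- (schloemilch_map a b t)\<^sup>2))) has_integral 2 * exp (- 2 * sqrt (a * b)) * sqrt pi) {0<..}"
    by (intro has_integral_mult_right has_integral_schloemilch_gaussian a b)
  then show ?thesis
  proof (rule has_integral_cong[THEN iffD1, rotated])
    fix t :: real assume "t \<in> {0<..}"
    then have t: "0 < t" by simp
    have "2 * exp (- 2 * sqrt (a * b)) * ((sqrt a / (2 * sqrt t) + sqrt b / (2 * t * sqrt t))
        * exp (- (schloemilch_map a b t)\<^sup>2))
        = 2 * (sqrt a / (2 * sqrt t) + sqrt b / (2 * t * sqrt t))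
        * (exp (- 2 * sqrt (a * b)) * exp (- (schloemilch_map a b t)\<^sup>2))"
      by (simp only: mult_ac)
    also have "\<dots> = sqrt a * (exp (- a * t - b / t) / sqrt t) + sqrt b * (exp (- a * t - b / t) / (t * sqrt t))"
      unfolding exp_minus_schloemilch_map_sq[OF a b t] using t by (simp add: field_simps)
    finally show "2 * exp (- 2 * sqrt (a * b)) * ((sqrt a / (2 * sqrt t) + sqrt b / (2 * t * sqrt t))
        * exp (- (schloemilch_map a b t)\<^sup>2))
        = sqrt a * (exp (- a * t - b / t) / sqrt t) + sqrt b * (exp (- a * t - b / t) / (t * sqrt t))" .
  qed
qed

lemma exp_at_b_over_t_inversion:
  assumes a: "0 < a" and b: "0 < b" and r: "0 < r"
  shows "(b / a) / r\<^sup>2 * (exp (- a * (b / a / r) - b / (b / a / r)) / sqrt (b / a / r))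
         = sqrt (b / a) * (exp (- a * r - b / r) / (r * sqrt r))"
proof -
  have "- a * (b / a / r) - b / (b / a / r) = - a * r - b / r"
    using a b r by (simp add: field_simps)
  moreover have "(b / a) / r\<^sup>2 / sqrt (b / a / r) = sqrt (b / a) / (r * sqrt r)"
    using a b r by (simp add: real_sqrt_divide real_sqrt_mult field_simps power2_eq_square)
  ultimately show ?thesis
    by (metis times_divide_eq_right divide_divide_eq_left mult.commute)
qed

lemma integrable_on_exp_at_b_over_t_3_2:
  assumes a: "0 < a" and b: "0 < b"
  shows "(\<lambda>t. exp (- a * t - b / t) / (t * sqrt t)) integrable_on {0<..}"
proof -
  let ?F = "\<lambda>t. exp (- a * t - b / t) / (t * sqrt t)"
  let ?G = "\<lambda>t. sqrt a * (exp (- a * t - b / t) / sqrt t) + sqrt b * ?F t"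
  have "?F absolutely_integrable_on {0<..}"
  proof (rule measurable_bounded_by_integrable_imp_absolutely_integrable)
    show "?F \<in> borel_measurable (lebesgue_on {0<..})"
      by (intro continuous_imp_measurable_on_sets_lebesgue continuous_intros) auto
    show "(\<lambda>t. ?G t / sqrt b) integrable_on {0<..}"
      using has_integral_exp_at_b_over_t_combined[OF a b] by (intro integrable_on_divide has_integral_integrable)
    show "norm (?F t) \<le> ?G t / sqrt b" if "t \<in> {0<..}" for t
    proof -
      have "sqrt b * ?F t \<le> ?G t"
        using that a by simp
      then show ?thesis
        using that b by (simp add: pos_le_divide_eq mult.commute)
    qed
  qed auto
  then show ?thesis
    by (rule set_lebesgue_integral_eq_integral(1))
qed

lemma
  assumes a: "0 < a" and b: "0 < b"
  shows has_integral_exp_at_b_over_t_3_2: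
      "((\<lambda>t. exp (- a * t - b / t) / (t * sqrt t)) has_integral sqrt pi / sqrt b * exp (- 2 * sqrt (a * b))) {0<..}"
    and has_integral_exp_at_b_over_t_1_2:
      "((\<lambda>t. exp (- a * t - b / t) / sqrt t) has_integral sqrt pi / sqrt a * exp (- 2 * sqrt (a * b))) {0<..}"
proof -
  define F1 where "F1 t = exp (- a * t - b / t) / sqrt t" for t
  define F3 where "F3 t = exp (- a * t - b / t) / (t * sqrt t)" for t
  define r3 where "r3 = integral {0<..} F3"
  have F3: "(F3 has_integral r3) {0<..}"
    unfolding F3_def[abs_def] r3_def using integrable_on_exp_at_b_over_t_3_2[OF a b] by (rule integrable_integral)
  \<comment> \<open>The inversion \<open>t \<mapsto> (b/a)/t\<close> carries the two summands of the combined integrand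
    into each other.\<close>
  have "((\<lambda>r. (b / a) / r\<^sup>2 * F1 (b / a / r)) has_integral sqrt (b / a) * r3) {0<..}"
  proof (rule has_integral_cong[THEN iffD1, OF _ has_integral_mult_right[OF F3]])
    show "sqrt (b / a) * F3 r = (b / a) / r\<^sup>2 * F1 (b / a / r)" if "r \<in> {0<..}" for r
      unfolding F1_def F3_def using exp_at_b_over_t_inversion[OF a b, of r] that by simp
  qed
  from has_integral_inversion[OF _ _ this] have F1: "(F1 has_integral sqrt (b / a) * r3) {0<..}"
    using a b by (simp add: F1_def[abs_def])
  have "sqrt a * (sqrt (b / a) * r3) + sqrt b * r3 = 2 * exp (- 2 * sqrt (a * b)) * sqrt pi"
    using has_integral_exp_at_b_over_t_combined[OF a b, folded F1_def F3_def]
    by (rule has_integral_unique[OF has_integral_add[OF has_integral_mult_right[OF F1] has_integral_mult_right[OF F3]]])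
  moreover have "sqrt a * sqrt (b / a) = sqrt b"
    using a b by (simp add: real_sqrt_divide)
  ultimately have "2 * sqrt b * r3 = 2 * exp (- 2 * sqrt (a * b)) * sqrt pi"
    by (metis mult.assoc mult.commute mult_2)
  then have r3: "r3 = sqrt pi / sqrt b * exp (- 2 * sqrt (a * b))"
    using b by (simp add: field_simps)
  then show "((\<lambda>t. exp (- a * t - b / t) / (t * sqrt t)) has_integral sqrt pi / sqrt b * exp (- 2 * sqrt (a * b))) {0<..}"
    using F3 by (simp add: F3_def[abs_def])
  have "sqrt (b / a) * r3 = sqrt pi / sqrt a * exp (- 2 * sqrt (a * b))"
    using a b unfolding r3 by (simp add: real_sqrt_divide)
  then show "((\<lambda>t. exp (- a * t - b / t) / sqrt t) has_integral sqrt pi / sqrt a * exp (- 2 * sqrt (a * b))) {0<..}"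
    using F1 by (simp add: F1_def[abs_def])
qed

section \<open>The inverse Gaussian law\<close>

lemma ig_density_nonneg: "0 \<le> kappa \<Longrightarrow> 0 \<le> ig_density nu kappa t"
  by (simp add: ig_density_def)

lemma borel_measurable_ig_density[measurable]: "ig_density nu kappa \<in> borel_measurable borel"
  unfolding ig_density_def[abs_def] by measurable

lemma abs_ln_le_add_inverse:
  fixes t :: real
  assumes t: "0 < t"
  shows "\<bar>ln t\<bar> \<le> t + 1 / t"
proof -
  have "ln (1 / t) \<le> 1 / t - 1"
    using t by (intro ln_le_minus_one) simp
  then have "- ln t \<le> 1 / t - 1"
    using t by (simp add: ln_div)
  moreover have "0 < 1 / t"
    using t by simp
  ultimately show ?thesis
    using ln_le_minus_one[OF t] t unfolding abs_le_iff by linarith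
qed

lemma exp_minus_divide_le:
  fixes t B :: real
  assumes t: "0 < t" and B: "0 < B"
  shows "exp (- B / t) / t \<le> 2 / B * exp (- (B / 2) / t)"
proof -
  define x where "x = (B / 2) / t"
  have "x \<le> exp x"
    using exp_ge_add_one_self[of x] by linarith
  then have "x * exp (- x) \<le> 1"
    by (simp add: exp_minus field_simps)
  have "exp (- B / t) / t = 2 / B * exp (- x) * (x * exp (- x))"
    using t B by (simp add: x_def exp_add[symmetric] field_simps)
  also have "\<dots> \<le> 2 / B * exp (- x) * 1"
    using \<open>x * exp (- x) \<le> 1\<close> B by (intro mult_left_mono) auto
  finally show ?thesis
    by (simp add: x_def)
qed

context
  fixes nu kappa :: real
  assumes nu: "0 < nu" and kappa: "0 < kappa"
begin

lemma ig_density_eq_kernel: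
  assumes t: "0 < t"
  shows "ig_density nu kappa t = sqrt (kappa / (2 * pi)) * exp (kappa / nu)
           * (exp (- (kappa / (2 * nu\<^sup>2)) * t - (kappa / 2) / t) / (t * sqrt t))"
proof -
  have "sqrt (kappa / (2 * pi * t ^ 3)) = sqrt (kappa / (2 * pi)) / (t * sqrt t)"
    using t by (simp add: real_sqrt_divide real_sqrt_mult power3_eq_cube)
  moreover have "- kappa * (t - nu)\<^sup>2 / (2 * nu\<^sup>2 * t)
      = kappa / nu + (- (kappa / (2 * nu\<^sup>2)) * t - (kappa / 2) / t)"
    using t nu by (simp add: power2_eq_square field_simps)
  ultimately show ?thesis
    using t by (simp add: ig_density_def exp_add)
qed

lemma sqrt_ig_kernel_coeffs: "sqrt (kappa / (2 * nu\<^sup>2) * (kappa / 2)) = kappa / (2 * nu)"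
proof -
  have "kappa / (2 * nu\<^sup>2) * (kappa / 2) = (kappa / (2 * nu))\<^sup>2"
    by (simp add: power2_eq_square)
  then show ?thesis using nu kappa by simp
qed

lemma has_bochner_integral_ig_density: "has_bochner_integral lborel (ig_density nu kappa) 1"
proof -
  let ?C = "sqrt (kappa / (2 * pi)) * exp (kappa / nu)"
  let ?k = "\<lambda>t. exp (- (kappa / (2 * nu\<^sup>2)) * t - (kappa / 2) / t) / (t * sqrt t)"
  have "((\<lambda>t. ?C * ?k t) has_integral ?C * (sqrt pi / sqrt (kappa / 2) * exp (- 2 * (kappa / (2 * nu))))) {0<..}"
    using has_integral_exp_at_b_over_t_3_2[of "kappa / (2 * nu\<^sup>2)" "kappa / 2", unfolded sqrt_ig_kernel_coeffs] nu kappa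
    by (intro has_integral_mult_right) simp
  moreover have "?C * (sqrt pi / sqrt (kappa / 2) * exp (- 2 * (kappa / (2 * nu)))) = 1"
    using kappa nu by (simp add: real_sqrt_divide real_sqrt_mult exp_minus_inverse field_simps)
  ultimately have "has_bochner_integral lborel (\<lambda>t. indicator {0<..} t * (?C * ?k t)) 1"
    by (intro has_bochner_integral_indicator_of_has_integral) (use kappa in auto)
  moreover have "(\<lambda>t. indicator {0<..} t * (?C * ?k t)) = ig_density nu kappa"
    by (auto simp: fun_eq_iff indicator_def ig_density_eq_kernel) (simp add: ig_density_def)
  ultimately show ?thesis by simp
qed

lemma has_bochner_integral_ig_density_mean: "has_bochner_integral lborel (\<lambda>t. ig_density nu kappa t * t) nu"
proof -
  let ?C = "sqrt (kappa / (2 * pi)) * exp (kappa / nu)"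
  let ?k = "\<lambda>t. exp (- (kappa / (2 * nu\<^sup>2)) * t - (kappa / 2) / t) / sqrt t"
  have "((\<lambda>t. ?C * ?k t)
      has_integral ?C * (sqrt pi / sqrt (kappa / (2 * nu\<^sup>2)) * exp (- 2 * (kappa / (2 * nu))))) {0<..}"
    using has_integral_exp_at_b_over_t_1_2[of "kappa / (2 * nu\<^sup>2)" "kappa / 2", unfolded sqrt_ig_kernel_coeffs] nu kappa
    by (intro has_integral_mult_right) simp
  moreover have "?C * (sqrt pi / sqrt (kappa / (2 * nu\<^sup>2)) * exp (- 2 * (kappa / (2 * nu)))) = nu"
    using kappa nu by (simp add: real_sqrt_divide real_sqrt_mult exp_minus_inverse field_simps)
  ultimately have "has_bochner_integral lborel (\<lambda>t. indicator {0<..} t * (?C * ?k t)) nu"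
    by (intro has_bochner_integral_indicator_of_has_integral) (use kappa in auto)
  moreover have "(\<lambda>t. indicator {0<..} t * (?C * ?k t)) = (\<lambda>t. ig_density nu kappa t * t)"
    by (auto simp: fun_eq_iff indicator_def ig_density_eq_kernel) (simp_all add: ig_density_def)
  ultimately show ?thesis by simp
qed

lemma abs_ig_density_ln_le:
  assumes t: "0 < t"
  shows "\<bar>ig_density nu kappa t * ln t\<bar> \<le> ig_density nu kappa t * t
    + 4 / kappa * sqrt (kappa / (2 * pi)) * exp (kappa / nu)
      * (exp (- (kappa / (2 * nu\<^sup>2)) * t - (kappa / 4) / t) / (t * sqrt t))"
proof -
  let ?a = "kappa / (2 * nu\<^sup>2)"
  let ?C = "sqrt (kappa / (2 * pi)) * exp (kappa / nu)"
  have ig: "0 \<le> ig_density nu kappa t"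
    using kappa by (simp add: ig_density_nonneg)
  have split: "exp (- ?a * t - c / t) = exp (- ?a * t) * exp (- c / t)" for c
    by (simp add: exp_add[symmetric])
  have "\<bar>ig_density nu kappa t * ln t\<bar> \<le> ig_density nu kappa t * (t + 1 / t)"
    using ig abs_ln_le_add_inverse[OF t] by (simp add: abs_mult mult_left_mono)
  also have "\<dots> = ig_density nu kappa t * t + ?C * exp (- ?a * t) * (exp (- (kappa / 2) / t) / t) / (t * sqrt t)"
    unfolding ig_density_eq_kernel[OF t] split using t by (simp add: field_simps)
  also have "\<dots> \<le> ig_density nu kappa t * t
      + ?C * exp (- ?a * t) * (2 / (kappa / 2) * exp (- (kappa / 2 / 2) / t)) / (t * sqrt t)"
    using t kappa exp_minus_divide_le[OF t, of "kappa / 2"]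
    by (intro add_left_mono divide_right_mono mult_left_mono) auto
  also have "\<dots> = ig_density nu kappa t * t
      + 4 / kappa * ?C * (exp (- ?a * t - (kappa / 4) / t) / (t * sqrt t))"
    unfolding split using t kappa by (simp add: field_simps)
  finally show ?thesis
    by (simp only: mult.assoc)
qed

text \<open>Since \<open>\<bar>ln t\<bar> \<le> t + 1/t\<close>, the logarithmic moment is controlled by the mean
  and by the kernel \<open>exp (-a t - b/t) / t powr (3/2)\<close> with \<open>b\<close> halved.\<close>
lemma integrable_ig_density_ln: "integrable lborel (\<lambda>t. ig_density nu kappa t * ln t)"
proof -
  let ?a = "kappa / (2 * nu\<^sup>2)"
  let ?C = "4 / kappa * sqrt (kappa / (2 * pi)) * exp (kappa / nu)"
  let ?k = "\<lambda>t. exp (- ?a * t - (kappa / 4) / t) / (t * sqrt t)"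
  have "(?k has_integral sqrt pi / sqrt (kappa / 4) * exp (- 2 * sqrt (?a * (kappa / 4)))) {0<..}"
    using nu kappa by (intro has_integral_exp_at_b_over_t_3_2) auto
  then have "integrable lborel (\<lambda>t. indicator {0<..} t * ?k t)"
    by (intro integrable.intros has_bochner_integral_indicator_of_has_integral) auto
  then have "integrable lborel (\<lambda>t. ig_density nu kappa t * t + ?C * (indicator {0<..} t * ?k t))"
    using integrable.intros[OF has_bochner_integral_ig_density_mean]
    by (intro Bochner_Integration.integrable_add integrable_mult_right)
  then show ?thesis
  proof (rule Bochner_Integration.integrable_bound)
    show "AE t in lborel. norm (ig_density nu kappa t * ln t)
        \<le> norm (ig_density nu kappa t * t + ?C * (indicator {0<..} t * ?k t))"
    proof (rule AE_I2)
      fix t :: real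
      show "norm (ig_density nu kappa t * ln t) \<le> norm (ig_density nu kappa t * t + ?C * (indicator {0<..} t * ?k t))"
      proof (cases "0 < t")
        case True
        then show ?thesis
          using abs_ig_density_ln_le[OF True] by (simp add: mult.assoc)
      qed (simp add: ig_density_def)
    qed
  qed simp
qed
end

section \<open>Entropy bounds for Gaussian scale mixtures\<close>

lemma ln_2_pi_exp_1_mult: "0 < (v::real) \<Longrightarrow> ln (2 * pi * exp 1 * v) = ln (2 * pi * v) + 1"
  by (simp add: ln_mult)

lemma gibbs_pointwise:
  fixes y z :: real
  assumes y: "0 \<le> y" and z: "0 < z"
  shows "y * ln z + y - z \<le> y * ln y"
proof (cases "y = 0")
  case True
  then show ?thesis using z by simp
next
  case False
  with y have y: "0 < y" by simp
  have "ln (z / y) \<le> z / y - 1"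
    using y z by (intro ln_le_minus_one) simp
  then have "y * ln (z / y) \<le> y * (z / y - 1)"
    using y by (intro mult_left_mono) auto
  then show ?thesis
    using y z by (simp add: ln_div algebra_simps)
qed

text \<open>\<open>T\<close> has density \<open>w\<close> on \<open>(0,\<infinity>)\<close> and \<open>N = \<surd>(s T) Z\<close> with \<open>Z\<close> standard Gaussian
  on \<open>\<real>\<^sup>n\<close>, independent of \<open>T\<close>: \<open>mixture\<close> is the density of \<open>N\<close> and \<open>joint x t\<close>
  the joint density of \<open>(N, T)\<close>.\<close>
locale gaussian_scale_mixture =
  fixes w :: "real \<Rightarrow> real" and s :: real
  assumes s_pos: "0 < s"
    and borel_measurable_w[measurable]: "w \<in> borel_measurable borel"
    and w_nonneg: "\<And>t. 0 \<le> w t"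
    and w_nonpos_eq_0: "\<And>t. t \<le> 0 \<Longrightarrow> w t = 0"
    and has_bochner_integral_w: "has_bochner_integral lborel w 1"
    and integrable_w_mult: "integrable lborel (\<lambda>t. w t * t)"
    and integrable_w_ln: "integrable lborel (\<lambda>t. w t * ln t)"
begin

abbreviation joint :: "real^'n \<Rightarrow> real \<Rightarrow> real" where
  "joint x t \<equiv> w t * gauss_density (s * t) x"

abbreviation joint_ln_cond :: "real^'n \<Rightarrow> real \<Rightarrow> real" where
  "joint_ln_cond x t \<equiv> w t * (gauss_density (s * t) x * ln (gauss_density (s * t) x))"

abbreviation w_mean :: real where
  "w_mean \<equiv> \<integral>t. w t * t \<partial>lborel"

definition mixture :: "real^'n \<Rightarrow> real" where
  "mixture x = (\<integral>t. joint x t \<partial>lborel)"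

lemma w_mult_nonneg: "0 \<le> w t * t"
  using w_nonneg[of t] w_nonpos_eq_0[of t] by (cases "0 < t") auto

lemma mean_pos: "0 < w_mean"
proof -
  have "w_mean \<noteq> 0"
  proof
    assume "w_mean = 0"
    then have "AE t in lborel. w t * t = 0"
      using integrable_w_mult w_mult_nonneg by (subst integral_nonneg_eq_0_iff_AE[symmetric]) auto
    then have "AE t in lborel. w t = 0"
      using AE_lborel_singleton[of 0] by eventually_elim simp
    then have "(\<integral>t. w t \<partial>lborel) = 0"
      by (rule integral_eq_zero_AE)
    then show False
      using has_bochner_integral_w by (simp add: has_bochner_integral_iff)
  qed
  moreover have "0 \<le> w_mean"
    by (simp add: w_mult_nonneg)
  ultimately show ?thesis by simp
qed

lemma joint_nonneg: "0 \<le> joint x t"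
  using w_nonneg[of t] w_nonpos_eq_0[of t] gauss_density_pos[of "s * t" x] s_pos
  by (cases "0 < t") auto

lemma nn_integral_joint_space:
  "(\<integral>\<^sup>+x. joint (x::real^'n) t \<partial>lborel) = w t"
proof (cases "0 < t")
  case True
  have "(\<integral>\<^sup>+x. joint (x::real^'n) t \<partial>lborel)
      = w t * (\<integral>\<^sup>+x. gauss_density (s * t) (x::real^'n) \<partial>lborel)"
    by (subst nn_integral_cmult[symmetric]) (auto intro!: nn_integral_cong simp: ennreal_mult' w_nonneg)
  then show ?thesis
    using True s_pos by (simp add: nn_integral_gauss_density)
qed (simp add: w_nonpos_eq_0)

lemma nn_integral_joint_space_norm_sq:
  "(\<integral>\<^sup>+x. joint (x::real^'n) t * (norm x)\<^sup>2 \<partial>lborel) = real CARD('n) * s * (w t * t)"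
proof (cases "0 < t")
  case True
  have "(\<integral>\<^sup>+x. joint (x::real^'n) t * (norm x)\<^sup>2 \<partial>lborel)
      = w t * (\<integral>\<^sup>+x. gauss_density (s * t) (x::real^'n) * (norm x)\<^sup>2 \<partial>lborel)"
    by (subst nn_integral_cmult[symmetric]) (auto intro!: nn_integral_cong simp: ennreal_mult' w_nonneg mult.assoc)
  then show ?thesis
    using True s_pos w_nonneg
    by (simp add: nn_integral_gauss_density_norm_sq ennreal_mult[symmetric] mult_ac)
qed (simp add: w_nonpos_eq_0)

lemma borel_measurable_joint[measurable]:
  "(\<lambda>(x, t). joint (x::real^'n) t) \<in> borel_measurable (lborel \<Otimes>\<^sub>M lborel)"
  unfolding gauss_density_def by measurable

lemma mixture_nonneg: "0 \<le> mixture x"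
  by (simp add: mixture_def joint_nonneg)

lemma borel_measurable_mixture[measurable]: "(mixture :: real^'n \<Rightarrow> real) \<in> borel_measurable lborel"
  unfolding mixture_def[abs_def] gauss_density_def by measurable

lemma nn_integral_joint:
  "(\<integral>\<^sup>+x. \<integral>\<^sup>+t. joint (x::real^'n) t \<partial>lborel \<partial>lborel) = 1"
proof -
  have "(\<integral>\<^sup>+x. \<integral>\<^sup>+t. joint (x::real^'n) t \<partial>lborel \<partial>lborel)
      = (\<integral>\<^sup>+t. \<integral>\<^sup>+x. joint (x::real^'n) t \<partial>lborel \<partial>lborel)"
    by (rule lborel_pair.Fubini'[symmetric]) measurable
  also have "\<dots> = (\<integral>\<^sup>+t. w t \<partial>lborel)"
    by (simp add: nn_integral_joint_space)
  also have "\<dots> = 1"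
    using has_bochner_integral_w w_nonneg
    by (subst nn_integral_eq_integral) (auto simp: has_bochner_integral_iff)
  finally show ?thesis .
qed

lemma AE_nn_integral_joint_finite:
  "AE x in lborel. (\<integral>\<^sup>+t. joint (x::real^'n) t \<partial>lborel) \<noteq> \<infinity>"
  by (rule nn_integral_PInf_AE) (simp_all add: nn_integral_joint)

lemma AE_integrable_joint:
  "AE x in lborel. integrable lborel (\<lambda>t. joint (x::real^'n) t)"
  using AE_nn_integral_joint_finite
  by eventually_elim (auto intro!: integrableI_nonneg joint_nonneg simp: less_top)

lemma AE_ennreal_mixture:
  "AE x in lborel. ennreal (mixture x) = (\<integral>\<^sup>+t. joint (x::real^'n) t \<partial>lborel)"
  using AE_nn_integral_joint_finite
  by eventually_elim (simp add: mixture_def integral_eq_nn_integral joint_nonneg ennreal_enn2real less_top)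

lemma has_bochner_integral_mixture: "has_bochner_integral lborel (mixture :: real^'n \<Rightarrow> real) 1"
proof -
  have "(\<integral>\<^sup>+x. mixture (x::real^'n) \<partial>lborel) = 1"
    using trans[OF nn_integral_cong_AE[OF AE_ennreal_mixture] nn_integral_joint] .
  then show ?thesis
    by (intro has_bochner_integral_nn_integral) (auto simp: mixture_nonneg)
qed

lemma has_bochner_integral_mixture_norm_sq:
  "has_bochner_integral lborel (\<lambda>x::real^'n. mixture x * (norm x)\<^sup>2)
     (real CARD('n) * s * w_mean)"
proof -
  have mean: "(\<integral>\<^sup>+t. real CARD('n) * s * (w t * t) \<partial>lborel) = real CARD('n) * s * w_mean"
  proof (subst nn_integral_eq_integral)
    show "AE t in lborel. 0 \<le> real CARD('n) * s * (w t * t)"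
      using s_pos w_mult_nonneg by (intro AE_I2) simp
  qed (use integrable_w_mult in auto)
  have "(\<integral>\<^sup>+x. mixture (x::real^'n) * (norm x)\<^sup>2 \<partial>lborel)
      = (\<integral>\<^sup>+x. \<integral>\<^sup>+t. joint (x::real^'n) t * (norm x)\<^sup>2 \<partial>lborel \<partial>lborel)"
  proof (rule nn_integral_cong_AE)
    show "AE x in lborel. ennreal (mixture x * (norm x)\<^sup>2)
        = (\<integral>\<^sup>+t. joint (x::real^'n) t * (norm x)\<^sup>2 \<partial>lborel)"
      using AE_ennreal_mixture
      by eventually_elim (simp add: ennreal_mult'' mixture_nonneg nn_integral_multc joint_nonneg)
  qed
  also have "\<dots> = (\<integral>\<^sup>+t. \<integral>\<^sup>+x. joint (x::real^'n) t * (norm x)\<^sup>2 \<partial>lborel \<partial>lborel)"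
    by (rule lborel_pair.Fubini'[symmetric]) measurable
  also have "\<dots> = real CARD('n) * s * w_mean"
    by (simp add: nn_integral_joint_space_norm_sq mean)
  finally show ?thesis
    using s_pos mean_pos by (intro has_bochner_integral_nn_integral) (auto simp: mixture_nonneg)
qed

lemma mixture_ln_mixture_le:
  fixes x :: "real^'n"
  assumes int_joint: "integrable lborel (\<lambda>t. joint x t)"
    and int_cond: "integrable lborel (\<lambda>t. joint_ln_cond x t)"
  shows "mixture x * ln (mixture x) \<le> (\<integral>t. joint_ln_cond x t \<partial>lborel)"
proof (cases "mixture x = 0")
  case True
  then have "AE t in lborel. joint x t = 0"
    using int_joint joint_nonneg by (subst integral_nonneg_eq_0_iff_AE[symmetric]) (auto simp: mixture_def)
  then have "AE t in lborel. joint_ln_cond x t = 0"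
    by eventually_elim auto
  then have "(\<integral>t. joint_ln_cond x t \<partial>lborel) = 0"
    by (rule integral_eq_zero_AE)
  then show ?thesis
    using True by simp
next
  case False
  then have m: "0 < mixture x"
    using mixture_nonneg[of x] by simp
  have "joint x t * ln (mixture x) + joint x t - mixture x * w t
      \<le> joint_ln_cond x t" for t
  proof (cases "0 < t")
    case True
    then have "gauss_density (s * t) x * ln (mixture x) + gauss_density (s * t) x - mixture x
        \<le> gauss_density (s * t) x * ln (gauss_density (s * t) x)"
      using m s_pos by (intro gibbs_pointwise less_imp_le gauss_density_pos) auto
    from mult_left_mono[OF this w_nonneg[of t]] show ?thesis
      by (simp add: algebra_simps)
  qed (simp add: w_nonpos_eq_0)
  then have "(\<integral>t. joint x t * ln (mixture x) + joint x t - mixture x * w t \<partial>lborel)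
      \<le> (\<integral>t. joint_ln_cond x t \<partial>lborel)"
    using int_joint int_cond has_bochner_integral_w by (intro integral_mono) (auto simp: has_bochner_integral_iff)
  moreover have "(\<integral>t. joint x t * ln (mixture x) + joint x t - mixture x * w t \<partial>lborel)
      = mixture x * ln (mixture x) + mixture x - mixture x * 1"
    using int_joint has_bochner_integral_w
    by (simp add: mixture_def has_bochner_integral_iff)
  ultimately show ?thesis by simp
qed

lemma borel_measurable_joint_ln_cond[measurable]:
  "(\<lambda>(x, t). joint_ln_cond (x::real^'n) t)
     \<in> borel_measurable (lborel \<Otimes>\<^sub>M lborel)"
  unfolding gauss_density_def by measurable

lemma nn_integral_abs_joint_ln_cond_le:
  "(\<integral>\<^sup>+x. norm (joint_ln_cond (x::real^'n) t) \<partial>lborel)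
     \<le> real CARD('n) / 2 * (\<bar>ln (2 * pi * s)\<bar> + 1) * w t + real CARD('n) / 2 * \<bar>w t * ln t\<bar>"
proof (cases "0 < t")
  case t: True
  have "(\<integral>\<^sup>+x. norm (joint_ln_cond (x::real^'n) t) \<partial>lborel)
      = ennreal (w t)
        * (\<integral>\<^sup>+x. norm (gauss_density (s * t) (x::real^'n) * ln (gauss_density (s * t) x)) \<partial>lborel)"
    by (subst nn_integral_cmult[symmetric]) (auto intro!: nn_integral_cong simp: ennreal_mult' w_nonneg abs_mult)
  also have "\<dots> \<le> ennreal (w t)
      * ennreal (real CARD('n) / 2 * \<bar>ln (2 * pi * (s * t))\<bar> + real CARD('n) / 2)"
    using s_pos t by (intro mult_left_mono nn_integral_abs_gauss_density_ln_le) auto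
  also have "\<dots> = ennreal (w t * (real CARD('n) / 2 * \<bar>ln (2 * pi * (s * t))\<bar> + real CARD('n) / 2))"
    by (simp add: ennreal_mult' w_nonneg)
  also have "\<dots> \<le> real CARD('n) / 2 * (\<bar>ln (2 * pi * s)\<bar> + 1) * w t + real CARD('n) / 2 * \<bar>w t * ln t\<bar>"
  proof (intro ennreal_leI)
    have "\<bar>ln (2 * pi * (s * t))\<bar> \<le> \<bar>ln (2 * pi * s)\<bar> + \<bar>ln t\<bar>"
      using s_pos t by (simp add: ln_mult mult.assoc[symmetric])
    then have "real CARD('n) / 2 * (w t * \<bar>ln (2 * pi * (s * t))\<bar>)
        \<le> real CARD('n) / 2 * (w t * (\<bar>ln (2 * pi * s)\<bar> + \<bar>ln t\<bar>))"
      using w_nonneg by (intro mult_left_mono) auto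
    then show "w t * (real CARD('n) / 2 * \<bar>ln (2 * pi * (s * t))\<bar> + real CARD('n) / 2)
        \<le> real CARD('n) / 2 * (\<bar>ln (2 * pi * s)\<bar> + 1) * w t + real CARD('n) / 2 * \<bar>w t * ln t\<bar>"
      using w_nonneg[of t] by (simp add: abs_mult algebra_simps)
  qed
  finally show ?thesis .
qed (simp add: w_nonpos_eq_0)

lemma integrable_joint_ln_cond:
  "integrable (lborel \<Otimes>\<^sub>M lborel)
     (\<lambda>(x, t). joint_ln_cond (x::real^'n) t)"
proof (subst integrable_iff_bounded, intro conjI)
  let ?B = "\<lambda>t. real CARD('n) / 2 * (\<bar>ln (2 * pi * s)\<bar> + 1) * w t + real CARD('n) / 2 * \<bar>w t * ln t\<bar>"
  have B: "integrable lborel ?B"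
    using has_bochner_integral_w integrable_w_ln by (auto simp: has_bochner_integral_iff)
  have "(\<integral>\<^sup>+z. norm ((\<lambda>(x, t). joint_ln_cond (x::real^'n) t) z)
      \<partial>(lborel \<Otimes>\<^sub>M lborel))
      = (\<integral>\<^sup>+t. \<integral>\<^sup>+x. norm (joint_ln_cond (x::real^'n) t) \<partial>lborel \<partial>lborel)"
    by (subst lborel_pair.nn_integral_snd[symmetric]) (auto simp: case_prod_beta)
  also have "\<dots> \<le> (\<integral>\<^sup>+t. ?B t \<partial>lborel)"
    by (intro nn_integral_mono nn_integral_abs_joint_ln_cond_le)
  also have "\<dots> < \<infinity>"
    using B w_nonneg by (subst nn_integral_eq_integral) auto
  finally show "(\<integral>\<^sup>+z. norm ((\<lambda>(x, t). joint_ln_cond (x::real^'n) t) z)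
      \<partial>(lborel \<Otimes>\<^sub>M lborel)) < \<infinity>" .
qed measurable

lemma integral_joint_ln_cond_space:
  "(\<integral>x. joint_ln_cond (x::real^'n) t \<partial>lborel)
     = - (real CARD('n) / 2) * (ln (2 * pi * s) + 1) * w t - real CARD('n) / 2 * (w t * ln t)"
proof (cases "0 < t")
  case t: True
  have "(\<integral>x. joint_ln_cond (x::real^'n) t \<partial>lborel)
      = w t * (- (real CARD('n) / 2) * (ln (2 * pi * (s * t)) + 1))"
    using has_bochner_integral_gauss_density_ln[of "s * t", where 'n = 'n] s_pos t
    by (simp add: has_bochner_integral_iff)
  also have "ln (2 * pi * (s * t)) = ln (2 * pi * s) + ln t"
    using s_pos t by (simp add: ln_mult mult.assoc)
  finally show ?thesis
    by (simp add: algebra_simps)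
qed (simp add: w_nonpos_eq_0)

lemma integral_integral_joint_ln_cond:
  "(\<integral>x. \<integral>t. joint_ln_cond (x::real^'n) t \<partial>lborel \<partial>lborel)
     = - (real CARD('n) / 2) * (ln (2 * pi * s) + 1) - real CARD('n) / 2 * (\<integral>t. w t * ln t \<partial>lborel)"
proof -
  have "(\<integral>x. \<integral>t. joint_ln_cond (x::real^'n) t \<partial>lborel \<partial>lborel)
      = (\<integral>t. \<integral>x. joint_ln_cond (x::real^'n) t \<partial>lborel \<partial>lborel)"
    using integrable_joint_ln_cond by (rule lborel_pair.Fubini_integral[symmetric])
  also have "\<dots> = (\<integral>t. - (real CARD('n) / 2) * (ln (2 * pi * s) + 1) * w t
      - real CARD('n) / 2 * (w t * ln t) \<partial>lborel)"
    by (simp only: integral_joint_ln_cond_space)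
  also have "\<dots> = - (real CARD('n) / 2) * (ln (2 * pi * s) + 1) - real CARD('n) / 2 * (\<integral>t. w t * ln t \<partial>lborel)"
    using has_bochner_integral_w integrable_w_ln by (simp add: has_bochner_integral_iff)
  finally show ?thesis .
qed

lemma AE_mixture_ln_mixture_le:
  "AE x in lborel. mixture x * ln (mixture x)
     \<le> (\<integral>t. joint_ln_cond (x::real^'n) t \<partial>lborel)"
  using AE_integrable_joint lborel_pair.AE_integrable_fst'[OF integrable_joint_ln_cond]
  by eventually_elim (simp add: mixture_ln_mixture_le)

lemma mixture_ln_gauss_le:
  "mixture x * ln (gauss_density (s * w_mean) x) + mixture x
     - gauss_density (s * w_mean) x \<le> mixture x * ln (mixture (x::real^'n))"
  using s_pos mean_pos by (intro gibbs_pointwise mixture_nonneg gauss_density_pos) simp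

lemma has_bochner_integral_mixture_ln_gauss:
  "has_bochner_integral lborel
     (\<lambda>x::real^'n. mixture x * ln (gauss_density (s * w_mean) x) + mixture x
        - gauss_density (s * w_mean) x)
     (- (real CARD('n) / 2) * (ln (2 * pi * (s * w_mean)) + 1))"
proof -
  define v where "v = s * w_mean"
  have v: "0 < v"
    using s_pos mean_pos by (simp add: v_def)
  have moment: "has_bochner_integral lborel (\<lambda>x::real^'n. mixture x * (norm x)\<^sup>2) (real CARD('n) * v)"
    using has_bochner_integral_mixture_norm_sq by (simp add: v_def mult.assoc)
  have "has_bochner_integral lborel
      (\<lambda>x::real^'n. - (real CARD('n) / 2) * ln (2 * pi * v) * mixture x - 1 / (2 * v) * (mixture x * (norm x)\<^sup>2)
         + mixture x - gauss_density v x)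
      (- (real CARD('n) / 2) * ln (2 * pi * v) * 1 - 1 / (2 * v) * (real CARD('n) * v) + 1 - 1)"
    using v by (intro has_bochner_integral_diff has_bochner_integral_add has_bochner_integral_mult_right
        has_bochner_integral_mixture moment has_bochner_integral_gauss_density)
  also have "(\<lambda>x::real^'n. - (real CARD('n) / 2) * ln (2 * pi * v) * mixture x - 1 / (2 * v) * (mixture x * (norm x)\<^sup>2)
      + mixture x - gauss_density v x)
      = (\<lambda>x. mixture x * ln (gauss_density v x) + mixture x - gauss_density v x)"
    using v by (simp add: ln_gauss_density field_simps)
  also have "- (real CARD('n) / 2) * ln (2 * pi * v) * 1 - 1 / (2 * v) * (real CARD('n) * v) + 1 - 1
      = - (real CARD('n) / 2) * (ln (2 * pi * v) + 1)"
    using v by (simp add: field_simps)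
  finally have "has_bochner_integral lborel
      (\<lambda>x::real^'n. mixture x * ln (gauss_density v x) + mixture x - gauss_density v x)
      (- (real CARD('n) / 2) * (ln (2 * pi * v) + 1))" .
  then show ?thesis
    by (simp add: v_def)
qed

lemma integrable_mixture_ln_mixture:
  "integrable lborel (\<lambda>x::real^'n. mixture x * ln (mixture x))"
proof (rule Bochner_Integration.integrable_bound)
  let ?L = "\<lambda>x::real^'n. mixture x * ln (gauss_density (s * w_mean) x) + mixture x
    - gauss_density (s * w_mean) x"
  let ?U = "\<lambda>x::real^'n. \<integral>t. joint_ln_cond x t \<partial>lborel"
  show "integrable lborel (\<lambda>x. \<bar>?L x\<bar> + \<bar>?U x\<bar>)"
    using has_bochner_integral_mixture_ln_gauss lborel_pair.integrable_fst'[OF integrable_joint_ln_cond]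
    by (auto simp: has_bochner_integral_iff)
  show "AE x in lborel. norm (mixture x * ln (mixture x)) \<le> norm (\<bar>?L x\<bar> + \<bar>?U x\<bar>)"
    using AE_mixture_ln_mixture_le
  proof eventually_elim
    case (elim x)
    then show ?case
      using mixture_ln_gauss_le[of x] by simp
  qed
qed measurable

theorem diff_entropy_mixture_le:
  "diff_entropy (mixture :: real^'n \<Rightarrow> real)
     \<le> real CARD('n) / 2 * ln (2 * pi * exp 1 * (s * w_mean))"
proof -
  have "(\<integral>x. mixture (x::real^'n) * ln (gauss_density (s * w_mean) x) + mixture x
      - gauss_density (s * w_mean) x \<partial>lborel)
      \<le> (\<integral>x. mixture (x::real^'n) * ln (mixture x) \<partial>lborel)"
    using has_bochner_integral_mixture_ln_gauss integrable_mixture_ln_mixture mixture_ln_gauss_le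
    by (intro Bochner_Integration.integral_mono) (auto simp: has_bochner_integral_iff)
  then show ?thesis
    using has_bochner_integral_mixture_ln_gauss[where 'n = 'n] s_pos mean_pos
    by (simp add: diff_entropy_def has_bochner_integral_iff ln_2_pi_exp_1_mult)
qed

theorem diff_entropy_mixture_ge:
  "real CARD('n) / 2 * ln (2 * pi * exp 1 * s) + real CARD('n) / 2 * (\<integral>t. w t * ln t \<partial>lborel)
     \<le> diff_entropy (mixture :: real^'n \<Rightarrow> real)"
proof -
  have "(\<integral>x. mixture (x::real^'n) * ln (mixture x) \<partial>lborel)
      \<le> (\<integral>x. \<integral>t. joint_ln_cond (x::real^'n) t \<partial>lborel \<partial>lborel)"
    using integrable_mixture_ln_mixture lborel_pair.integrable_fst'[OF integrable_joint_ln_cond] AE_mixture_ln_mixture_le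
    by (intro integral_mono_AE) auto
  also have "\<dots> = - (real CARD('n) / 2) * (ln (2 * pi * s) + 1) - real CARD('n) / 2 * (\<integral>t. w t * ln t \<partial>lborel)"
    by (rule integral_integral_joint_ln_cond)
  finally show ?thesis
    unfolding diff_entropy_def ln_2_pi_exp_1_mult[OF s_pos] by (simp add: algebra_simps)
qed

end

lemma gaussian_scale_mixture_ig_density:
  assumes "0 < s" "0 < nu" "0 < kappa"
  shows "gaussian_scale_mixture (ig_density nu kappa) s"
proof
  show "has_bochner_integral lborel (ig_density nu kappa) 1"
    using assms(2,3) by (rule has_bochner_integral_ig_density)
  show "integrable lborel (\<lambda>t. ig_density nu kappa t * t)"
    using has_bochner_integral_ig_density_mean[OF assms(2,3)] by (rule integrable.intros)
  show "integrable lborel (\<lambda>t. ig_density nu kappa t * ln t)"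
    using assms(2,3) by (rule integrable_ig_density_ln)
qed (use assms in \<open>auto simp: ig_density_nonneg ig_density_def\<close>)

theorem lemma4:
  fixes lambda sg mu u :: real
  assumes "lambda > 0" and "sg > 0" and "mu > 0"
    and "u = mu / sg\<^sup>2"
  defines "p \<equiv> real CARD('n)"
    and "nu \<equiv> lambda / mu" and "kappa \<equiv> lambda\<^sup>2 / sg\<^sup>2"
  defines "hN \<equiv> diff_entropy (mix_density sg nu kappa :: real ^ 'n \<Rightarrow> real)"
    and "hlow \<equiv> p / 2 * ln (2 * pi * exp 1 * sg\<^sup>2) + p / 2 * ig_expect nu kappa ln"
    and "hup \<equiv> p / 2 * ln (2 * pi * exp 1 * (lambda / u))"
  shows "hlow \<le> hN \<and> hN \<le> hup \<and>
         0 \<le> hN - hlow \<and> hN - hlow \<le> hup - hlow \<and>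
         hup - hlow \<le> p / 2 * (ln (ig_expect nu kappa (\<lambda>t. t)) - ig_expect nu kappa ln)"
proof -
  have nu: "0 < nu" and kappa: "0 < kappa"
    using assms(1-3) by (auto simp: nu_def kappa_def)
  interpret T: gaussian_scale_mixture "ig_density nu kappa" "sg\<^sup>2"
    using assms(2) nu kappa by (intro gaussian_scale_mixture_ig_density) auto
  have mix: "mix_density sg nu kappa = T.mixture"
    by (simp add: fun_eq_iff mix_density_def T.mixture_def)
  have mean: "ig_expect nu kappa (\<lambda>t. t) = nu"
    using has_bochner_integral_ig_density_mean[OF nu kappa] by (simp add: ig_expect_def has_bochner_integral_iff)
  have lambda_u: "lambda / u = sg\<^sup>2 * nu"
    using assms(1-3) unfolding assms(4) nu_def by (simp add: field_simps)
  have "hlow \<le> hN"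
    using T.diff_entropy_mixture_ge unfolding hlow_def hN_def p_def mix ig_expect_def .
  moreover have "hN \<le> hup"
    using T.diff_entropy_mixture_le mean unfolding hup_def hN_def p_def mix lambda_u ig_expect_def by simp
  moreover have "hup - hlow = p / 2 * (ln (ig_expect nu kappa (\<lambda>t. t)) - ig_expect nu kappa ln)"
    using assms(2) nu unfolding hup_def hlow_def lambda_u mean by (simp add: ln_mult algebra_simps)
  ultimately show ?thesis by simp
qed

end
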